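(* Let $R$ be an associative unital division ring over a field $F$ of characteristic $0$, let $\lambda\in F$, and let $\theta_{m,n}\in R$ be invertible for all $(m,n)\in\mathbb{Z}^2$. Define the $2\times2$ matrices $$\mathcal{L}_{m,n}=\begin{pmatrix}\lambda-\theta_{m+1,n}\theta_{m+2,n-1}^{-1}-\theta_{m+2,n}\theta_{m+1,n}^{-1} & -\theta_{m+1,n}\\ \theta_{m+1,n}^{-1} & 0\end{pmatrix},\qquad \mathcal{M}_{m,n}=\begin{pmatrix}1 & \theta_{m,n}\\ -\theta_{m+1,n-1}^{-1} & \lambda-\theta_{m+1,n-1}^{-1}\theta_{m,n}\end{pmatrix}.$$ If $\theta$ satisfies $\theta_{m+2,n}=\theta_{m,n+1}+\theta_{m+1,n}(\theta_{m,n}^{-1}-\theta_{m+2,n-1}^{-1})\theta_{m+1,n}$ for all $(m,n)$, then $\mathcal{L}_{m-1,n}\mathcal{M}_{m,n}=\mathcal{M}_{m,n+1}\mathcal{L}_{m,n}$ for all $(m,n)\in\mathbb{Z}^2$. *)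

theory Defs
  imports Main
begin

text \<open>2x2 matrices over an arbitrary (possibly noncommutative) ring,
  entries listed row by row: M2 a11 a12 a21 a22.\<close>
datatype 'a mat2 = M2 'a 'a 'a 'a


fun m2mult :: "'a::semiring mat2 \<Rightarrow> 'a mat2 \<Rightarrow> 'a mat2" where
  "m2mult (M2 a b c d) (M2 e f g h) =
     M2 (a*e + b*g) (a*f + b*h) (c*e + d*g) (c*f + d*h)"

text \<open>An F-algebra structure on R: a unital ring homomorphism from F into the centre of R.\<close>
definition central_alg_hom :: "('f::field \<Rightarrow> 'r::ring_1) \<Rightarrow> bool" where
  "central_alg_hom \<phi> \<longleftrightarrow> \<phi> 1 = 1 \<and> (\<forall>x y. \<phi> (x + y) = \<phi> x + \<phi> y)
     \<and> (\<forall>x y. \<phi> (x * y) = \<phi> x * \<phi> y) \<and> (\<forall>x r. \<phi> x * r = r * \<phi> x)"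

definition Lmat :: "('f \<Rightarrow> 'r::division_ring) \<Rightarrow> 'f \<Rightarrow> (int \<Rightarrow> int \<Rightarrow> 'r) \<Rightarrow> int \<Rightarrow> int \<Rightarrow> 'r mat2" where
  "Lmat \<phi> lam \<theta> m n =
     M2 (\<phi> lam - \<theta> (m+1) n * inverse (\<theta> (m+2) (n-1)) - \<theta> (m+2) n * inverse (\<theta> (m+1) n))
        (- \<theta> (m+1) n)
        (inverse (\<theta> (m+1) n)) 0"

definition Mmat :: "('f \<Rightarrow> 'r::division_ring) \<Rightarrow> 'f \<Rightarrow> (int \<Rightarrow> int \<Rightarrow> 'r) \<Rightarrow> int \<Rightarrow> int \<Rightarrow> 'r mat2" where
  "Mmat \<phi> lam \<theta> m n =
     M2 1 (\<theta> m n)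
        (- inverse (\<theta> (m+1) (n-1))) (\<phi> lam - inverse (\<theta> (m+1) (n-1)) * \<theta> m n)"

end

theory Submission
  imports Defs
begin

text \<open>The variables are the values of \<open>\<theta>\<close> on one cell of the lattice:
  \<open>a = \<theta>(m,n)\<close>, \<open>b = \<theta>(m+1,n-1)\<close>, \<open>c = \<theta>(m+1,n)\<close>, \<open>d = \<theta>(m,n+1)\<close>,
  \<open>e = \<theta>(m+2,n)\<close>, \<open>f = \<theta>(m+2,n-1)\<close>; only \<open>a\<close> and \<open>c\<close> need to be invertible.\<close>
lemma lax_pair_cell:
  fixes a b c d e f L :: "'r::division_ring"
  assumes a: "a \<noteq> 0" and c: "c \<noteq> 0"
    and L_central: "\<And>x. L * x = x * L"
    and e: "e = d + c * (inverse a - inverse f) * c"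
  shows "m2mult (M2 (L - a * inverse b - c * inverse a) (- a) (inverse a) 0)
                (M2 1 a (- inverse b) (L - inverse b * a))
       = m2mult (M2 1 d (- inverse c) (L - inverse c * d))
                (M2 (L - c * inverse f - e * inverse c) (- c) (inverse c) 0)"
proof -
  have e_right: "e * inverse c = d * inverse c + c * inverse a - c * inverse f"
    using c unfolding e
    by (simp add: distrib_right left_diff_distrib right_diff_distrib mult.assoc)
  have e_both: "inverse c * e * inverse c = inverse c * d * inverse c + inverse a - inverse f"
    using c unfolding e
    by (simp add: distrib_right distrib_left left_diff_distrib right_diff_distrib mult.assoc,
        simp add: mult.assoc[symmetric])
  have entry11: "(L - a * inverse b - c * inverse a) * 1 + - a * - inverse b
      = 1 * (L - c * inverse f - e * inverse c) + d * inverse c"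
    unfolding e_right by simp
  have entry12: "(L - a * inverse b - c * inverse a) * a + - a * (L - inverse b * a)
      = 1 * - c + d * 0"
    using a by (simp add: left_diff_distrib right_diff_distrib mult.assoc L_central)
  have "- inverse c * (L - c * inverse f - e * inverse c) + (L - inverse c * d) * inverse c
      = inverse f + inverse c * e * inverse c - inverse c * d * inverse c"
    using c by (simp add: left_diff_distrib right_diff_distrib mult.assoc L_central,
                simp add: mult.assoc[symmetric])
  then have entry21: "inverse a * 1 + 0 * - inverse b
      = - inverse c * (L - c * inverse f - e * inverse c) + (L - inverse c * d) * inverse c"
    by (simp add: e_both)
  have entry22: "inverse a * a + 0 * (L - inverse b * a)
      = - inverse c * - c + (L - inverse c * d) * 0"
    using a c by simp
  show ?thesis
    using entry11 entry12 entry21 entry22 by simp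
qed

theorem proposition4p2:
  fixes \<phi> :: "'f::field_char_0 \<Rightarrow> 'r::division_ring"
    and lam :: 'f
    and \<theta> :: "int \<Rightarrow> int \<Rightarrow> 'r"
  assumes alg: "central_alg_hom \<phi>"
    and inv: "\<And>m n. \<theta> m n \<noteq> 0"
    and rec: "\<And>m n. \<theta> (m+2) n = \<theta> m (n+1)
                 + \<theta> (m+1) n * (inverse (\<theta> m n) - inverse (\<theta> (m+2) (n-1))) * \<theta> (m+1) n"
  shows "\<forall>m n. m2mult (Lmat \<phi> lam \<theta> (m-1) n) (Mmat \<phi> lam \<theta> m n)
             = m2mult (Mmat \<phi> lam \<theta> m (n+1)) (Lmat \<phi> lam \<theta> m n)"
proof (intro allI)
  fix m n :: int
  have lam_central: "\<And>x. \<phi> lam * x = x * \<phi> lam"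
    using alg by (simp add: central_alg_hom_def)
  have shifts: "m - 1 + 1 = m" "m - 1 + 2 = m + 1" "n + 1 - 1 = n"
    by simp_all
  show "m2mult (Lmat \<phi> lam \<theta> (m-1) n) (Mmat \<phi> lam \<theta> m n)
      = m2mult (Mmat \<phi> lam \<theta> m (n+1)) (Lmat \<phi> lam \<theta> m n)"
    unfolding Lmat_def Mmat_def shifts
    by (rule lax_pair_cell[OF inv inv lam_central rec])
qed

end
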